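(* Let $n\ge0$ and run the Tiden–Arnborg algorithm on $\sigma(n)$, performing sum transformations level by level. At each level $k<n+3$, the sum transformation is applied $2^k-1$ times.
   Context: Variables are $T$, $x_s$, $y_s$ with $s$ a string over $\{1,2\}$ ($x=x_\varepsilon$, $y=y_\varepsilon$); the level of $x_s$ or $y_s$ is $|s|+1$, and a sum transformation is said to be at level $k$ if it is applied at a peak of level $k$. For $n\ge0$, $\sigma(n)$ consists of, for all $0\le i\le n$: $x_{1^i}=^?x_{1^{i+1}}+x_{1^i2}$, $y_{2^i}=^?y_{2^i1}+y_{2^{i+1}}$, $y_{2^i1}=^?T\times x_{1^i2}$, $x=^?T\times y$, $x_{1^{i+1}}=^?x_{1^{i+2}}+x_{1^{i+1}2}$; its variables occupy levels $1,\dots,n+3$. A variable $U_i$ ($U\in\{x,y\}$) is a peak if the system contains both $U_i=^?U_{i1}+U_{i2}$ and $U_i=^?T\times W_j$. A sum transformation at a peak $U_i$ replaces $U_i=^?U_{i1}+U_{i2}$ by $W_j=^?W_{j1}+W_{j2}$, $U_{i1}=^?T\times W_{j1}$, $U_{i2}=^?T\times W_{j2}$ (keeping $U_i=^?T\times W_j$), with $W_{j1},W_{j2}$ identified with the existing children of $W_j$ if $W_j$ already has a sum equation. The Tiden–Arnborg algorithm (for $x\times(y+z)=x\times y+x\times z$) applies sum transformations as long as possible, completing all those at one level before the next. *)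

theory Defs
  imports Main
begin

(* Letters of the index strings s over {1,2} *)
datatype dir = One | Two

datatype var = T | X "dir list" | Y "dir list"

(* Equations: SumEq U A B  is  U =? A + B ;  ProdEq U A B  is  U =? A * B *)
datatype eqn = SumEq var var var | ProdEq var var var

type_synonym sys = "eqn set"

fun level :: "var \<Rightarrow> nat" where
  "level T = 0"
| "level (X s) = length s + 1"
| "level (Y s) = length s + 1"

fun child :: "var \<Rightarrow> dir \<Rightarrow> var" where
  "child T d = T"
| "child (X s) d = X (s @ [d])"
| "child (Y s) d = Y (s @ [d])"

definition sigma :: "nat \<Rightarrow> sys" where
  "sigma n = (\<Union>i\<in>{0..n}.
     { SumEq (X (replicate i One)) (X (replicate (Suc i) One)) (X (replicate i One @ [Two])),
       SumEq (Y (replicate i Two)) (Y (replicate i Two @ [One])) (Y (replicate (Suc i) Two)),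
       ProdEq (Y (replicate i Two @ [One])) T (X (replicate i One @ [Two])),
       ProdEq (X []) T (Y []),
       SumEq (X (replicate (Suc i) One)) (X (replicate (Suc (Suc i)) One))
             (X (replicate (Suc i) One @ [Two])) })"

definition peak :: "sys \<Rightarrow> var \<Rightarrow> bool" where
  "peak S U \<longleftrightarrow> U \<noteq> T \<and> (\<exists>A B. SumEq U A B \<in> S) \<and> (\<exists>W. ProdEq U T W \<in> S)"

definition sum_transform :: "sys \<Rightarrow> var \<Rightarrow> sys \<Rightarrow> bool" where
  "sum_transform S U S' \<longleftrightarrow> U \<noteq> T \<and>
     (\<exists>U1 U2 W W1 W2. SumEq U U1 U2 \<in> S \<and> ProdEq U T W \<in> S \<and>
        (SumEq W W1 W2 \<in> S \<or>
         ((\<forall>A B. SumEq W A B \<notin> S) \<and> W1 = child W One \<and> W2 = child W Two)) \<and>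
        S' = (S - {SumEq U U1 U2}) \<union> {SumEq W W1 W2, ProdEq U1 T W1, ProdEq U2 T W2})"

inductive steps_at :: "nat \<Rightarrow> sys \<Rightarrow> nat \<Rightarrow> sys \<Rightarrow> bool" for k where
  refl: "steps_at k S 0 S"
| step: "steps_at k S m S' \<Longrightarrow> sum_transform S' U S'' \<Longrightarrow> level U = k \<Longrightarrow>
         steps_at k S (Suc m) S''"

definition complete_phase :: "nat \<Rightarrow> sys \<Rightarrow> nat \<Rightarrow> sys \<Rightarrow> bool" where
  "complete_phase k S m S' \<longleftrightarrow> steps_at k S m S' \<and> \<not> (\<exists>U. peak S' U \<and> level U = k)"

end

theory Submission
  imports Defs
begin

(* Let N = 2^k. The variables of level k, listed as row (k - 1), form a chain
   U_0 =? T * U_1, ..., U_(N-2) =? T * U_(N-1) of product equations, and only U_0 and U_(N-1)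
   carry sum equations. A sum transformation at the peak U_j moves the sum equation from U_j to
   U_(j+1) and links the children of U_j to those of U_(j+1); the last variable U_(N-1) starts no
   link and is never a peak. Hence the phase at level k consists of exactly N - 1 transformations.
   Afterwards the links among the One-children, the equation y_(2^(k-1) 1) =? T * x_(1^(k-1) 2)
   of sigma(n) and the links among the Two-children form the chain of level k + 1 in the order of
   row k, and x_(1^k) still carries its sum equation from sigma(n). *)

definition chain_links :: "'a list \<Rightarrow> ('a \<times> 'a) set" where
  "chain_links xs = {(xs ! i, xs ! Suc i) | i. Suc i < length xs}"

lemma chain_links_map: "chain_links (map f xs) = map_prod f f ` chain_links xs"
  unfolding chain_links_def by force

lemma chain_links_append:
  assumes "xs \<noteq> []" "ys \<noteq> []"
  shows "chain_links (xs @ ys) = insert (last xs, hd ys) (chain_links xs \<union> chain_links ys)"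
proof (intro equalityI subsetI)
  fix p assume "p \<in> chain_links (xs @ ys)"
  then obtain i where p: "p = ((xs @ ys) ! i, (xs @ ys) ! Suc i)"
    and i: "Suc i < length xs + length ys"
    unfolding chain_links_def by auto
  consider "Suc i < length xs" | "Suc i = length xs" | "length xs \<le> i" by linarith
  then show "p \<in> insert (last xs, hd ys) (chain_links xs \<union> chain_links ys)"
  proof cases
    case 1
    then show ?thesis
      using p unfolding chain_links_def by (auto simp: nth_append)
  next
    case 2
    then have "i = length xs - 1" by simp
    then have "p = (xs ! (length xs - 1), ys ! 0)" using p 2 by (simp add: nth_append)
    then show ?thesis using assms by (simp add: last_conv_nth hd_conv_nth)
  next
    case 3
    then obtain k where "i = length xs + k" using le_Suc_ex by blast
    then show ?thesis using p i unfolding chain_links_def by (auto simp: nth_append)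
  qed
next
  fix p assume "p \<in> insert (last xs, hd ys) (chain_links xs \<union> chain_links ys)"
  then consider "p = (last xs, hd ys)" | "p \<in> chain_links xs" | "p \<in> chain_links ys" by blast
  then show "p \<in> chain_links (xs @ ys)"
  proof cases
    case 1
    then have "p = ((xs @ ys) ! (length xs - 1), (xs @ ys) ! Suc (length xs - 1))"
      using assms by (simp add: nth_append last_conv_nth hd_conv_nth)
    then show ?thesis using assms unfolding chain_links_def by fastforce
  next
    case 2
    then show ?thesis
      unfolding chain_links_def by (fastforce simp: nth_append)
  next
    case 3
    then obtain i where "p = (ys ! i, ys ! Suc i)" "Suc i < length ys"
      unfolding chain_links_def by blast
    then have "p = ((xs @ ys) ! (length xs + i), (xs @ ys) ! Suc (length xs + i))"
      by (simp add: nth_append)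
    then show ?thesis using \<open>Suc i < length ys\<close> unfolding chain_links_def by fastforce
  qed
qed

lemma chain_links_take_Suc_0: "chain_links (take (Suc 0) xs) = {}"
  unfolding chain_links_def by auto

lemma chain_links_take:
  assumes "j < length xs"
  shows "chain_links (take (Suc j) xs) = {(xs ! i, xs ! Suc i) | i. i < j}"
proof -
  have "take (Suc j) xs ! i = xs ! i" if "i \<le> j" for i
    using that by simp
  then show ?thesis
    using assms unfolding chain_links_def by (force simp: min_def)
qed

lemma chain_links_take_Suc:
  assumes "Suc j < length xs"
  shows "chain_links (take (Suc (Suc j)) xs) =
    insert (xs ! j, xs ! Suc j) (chain_links (take (Suc j) xs))"
  using assms by (auto simp: chain_links_take less_Suc_eq)

lemma chain_links_fst_neq_last:
  assumes "distinct xs" "(x, y) \<in> chain_links xs"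
  shows "x \<noteq> last xs"
proof -
  obtain i where "x = xs ! i" "Suc i < length xs"
    using assms(2) unfolding chain_links_def by blast
  moreover have "last xs = xs ! (length xs - 1)"
    using \<open>Suc i < length xs\<close> by (intro last_conv_nth) auto
  ultimately show ?thesis
    using assms(1) by (simp add: nth_eq_iff_index_eq)
qed

lemma chain_links_functional:
  assumes "distinct xs" "(x, y) \<in> chain_links xs" "(x, z) \<in> chain_links xs"
  shows "y = z"
  using assms unfolding chain_links_def by (auto simp: nth_eq_iff_index_eq)

definition heads :: "sys \<Rightarrow> var set" where
  "heads S = {U. \<exists>A B. SumEq U A B \<in> S}"

definition links :: "sys \<Rightarrow> (var \<times> var) set" where
  "links S = {(U, W). ProdEq U T W \<in> S}"

definition heads_at :: "nat \<Rightarrow> sys \<Rightarrow> var set" where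
  "heads_at l S = {U \<in> heads S. level U = l}"

definition links_at :: "nat \<Rightarrow> sys \<Rightarrow> (var \<times> var) set" where
  "links_at l S = {(U, W) \<in> links S. level U = l}"

definition canonical_sums :: "sys \<Rightarrow> bool" where
  "canonical_sums S \<longleftrightarrow> (\<forall>U A B. SumEq U A B \<in> S \<longrightarrow> A = child U One \<and> B = child U Two)"

definition children_links :: "(var \<times> var) set \<Rightarrow> (var \<times> var) set" where
  "children_links L = (\<Union>d. map_prod (\<lambda>U. child U d) (\<lambda>W. child W d) ` L)"

lemma UNIV_dir: "(UNIV :: dir set) = {One, Two}"
  using dir.exhaust by auto

lemma peak_iff: "peak S U \<longleftrightarrow> U \<noteq> T \<and> U \<in> heads S \<and> (\<exists>W. (U, W) \<in> links S)"
  unfolding peak_def heads_def links_def by blast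

lemma level_child: "U \<noteq> T \<Longrightarrow> level (child U d) = Suc (level U)"
  by (cases U) auto

lemma children_links_union: "children_links (L \<union> M) = children_links L \<union> children_links M"
  unfolding children_links_def by auto

lemma children_links_empty [simp]: "children_links {} = {}"
  unfolding children_links_def by simp

lemma children_links_singleton:
  "children_links {(U, W)} = {(child U One, child W One), (child U Two, child W Two)}"
  unfolding children_links_def UNIV_dir by auto

lemma level_children_links:
  assumes "\<forall>(U, W) \<in> L. level U = Suc l" "(A, B) \<in> children_links L"
  shows "level A = Suc (Suc l)"
proof -
  obtain U W d where "(U, W) \<in> L" "A = child U d"
    using assms(2) unfolding children_links_def by auto
  moreover from this have "level U = Suc l"
    using assms(1) by blast
  moreover from this have "U \<noteq> T"
    by (cases U) auto
  ultimately show ?thesis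
    by (simp add: level_child)
qed

lemma sum_transform_canonical:
  assumes can: "canonical_sums S" and tr: "sum_transform S U S'"
  obtains W where "U \<in> heads S" "(U, W) \<in> links S" "canonical_sums S'"
    "heads S' = insert W (heads S - {U})"
    "links S' = links S \<union> children_links {(U, W)}"
proof -
  from tr obtain U1 U2 W W1 W2 where
    sum: "SumEq U U1 U2 \<in> S" and prod: "ProdEq U T W \<in> S" and
    new: "SumEq W W1 W2 \<in> S \<or> W1 = child W One \<and> W2 = child W Two" and
    S': "S' = (S - {SumEq U U1 U2}) \<union> {SumEq W W1 W2, ProdEq U1 T W1, ProdEq U2 T W2}"
    unfolding sum_transform_def by blast
  have U12: "U1 = child U One" "U2 = child U Two" and W12: "W1 = child W One" "W2 = child W Two"
    using can sum new unfolding canonical_sums_def by blast+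
  have "SumEq U A B \<in> S \<Longrightarrow> SumEq U A B = SumEq U U1 U2" for A B
    using can unfolding canonical_sums_def U12 by blast
  then have "heads S' = insert W (heads S - {U})"
    unfolding heads_def S' by blast
  moreover have "links S' = links S \<union> children_links {(U, W)}"
    unfolding links_def children_links_singleton S' U12 W12 by auto
  moreover have "canonical_sums S'"
    using can unfolding canonical_sums_def S' W12 by blast
  ultimately show ?thesis
    using that sum prod unfolding heads_def links_def by blast
qed

fun row :: "nat \<Rightarrow> var list" where
  "row 0 = [X [], Y []]"
| "row (Suc m) = map (\<lambda>U. child U One) (row m) @ map (\<lambda>U. child U Two) (row m)"

lemma length_row: "length (row m) = 2 ^ Suc m"
  by (induction m) auto

lemma row_ne_Nil: "row m \<noteq> []"
  using length_row[of m] by auto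

lemma level_row: "U \<in> set (row m) \<Longrightarrow> level U = Suc m"
proof (induction m arbitrary: U)
  case (Suc m)
  then obtain V d where "V \<in> set (row m)" "U = child V d"
    by auto
  moreover from this have "level V = Suc m"
    using Suc.IH by blast
  moreover from this have "V \<noteq> T"
    by (cases V) auto
  ultimately show ?case
    by (simp add: level_child)
qed auto

lemma child_eq_child_iff:
  "U \<noteq> T \<Longrightarrow> V \<noteq> T \<Longrightarrow> child U d = child V e \<longleftrightarrow> U = V \<and> d = e"
  by (cases U; cases V) auto

lemma distinct_row: "distinct (row m)"
proof (induction m)
  case (Suc m)
  have not_T: "U \<noteq> T" if "U \<in> set (row m)" for U
    using level_row[OF that] by auto
  have "inj_on (\<lambda>U. child U d) (set (row m))" for d
    by (rule inj_onI) (simp add: child_eq_child_iff not_T)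
  moreover have "child U One \<noteq> child V Two" if "U \<in> set (row m)" "V \<in> set (row m)" for U V
    using that by (simp add: child_eq_child_iff not_T)
  ultimately show ?case
    using Suc.IH by (auto simp: distinct_map)
qed simp

lemma hd_row: "hd (row m) = X (replicate m One)"
  by (induction m) (simp_all add: row_ne_Nil hd_map last_map replicate_append_same)

lemma last_row: "last (row m) = Y (replicate m Two)"
  by (induction m) (simp_all add: row_ne_Nil hd_map last_map replicate_append_same)

lemma chain_links_row_Suc:
  "chain_links (row (Suc m)) =
     insert (child (last (row m)) One, child (hd (row m)) Two) (children_links (chain_links (row m)))"
  by (auto simp: chain_links_append chain_links_map row_ne_Nil last_map hd_map
      children_links_def UNIV_dir)

lemma canonical_sums_sigma: "canonical_sums (sigma n)"
  unfolding canonical_sums_def sigma_def by (auto simp: replicate_append_same)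

lemma links_sigma:
  "links (sigma n) = insert (X [], Y [])
     {(Y (replicate i Two @ [One]), X (replicate i One @ [Two])) | i. i \<le> n}"
  unfolding links_def sigma_def by auto

lemma heads_sigma_spine:
  assumes "U \<in> heads (sigma n)"
  obtains i where "U = X (replicate i One) \<or> U = Y (replicate i Two)"
  using assms unfolding heads_def sigma_def
  by (auto simp del: replicate_Suc simp: replicate_append_same)

lemma X_spine_in_heads_sigma:
  assumes "m \<le> Suc n"
  shows "X (replicate m One) \<in> heads (sigma n)"
proof (cases m)
  case 0
  then show ?thesis unfolding heads_def sigma_def by auto
next
  case (Suc i)
  then have "SumEq (X (replicate m One)) (X (replicate (Suc m) One)) (X (replicate m One @ [Two]))
      \<in> sigma n"
    using assms unfolding sigma_def by (auto simp del: replicate_Suc)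
  then show ?thesis unfolding heads_def by blast
qed

lemma links_at_sigma_1: "links_at 1 (sigma n) = chain_links (row 0)"
  unfolding links_at_def links_sigma chain_links_def by auto

lemma links_at_sigma_Suc_Suc:
  assumes "m \<le> n"
  shows "links_at (Suc (Suc m)) (sigma n) = {(child (last (row m)) One, child (hd (row m)) Two)}"
  using assms unfolding links_at_def links_sigma by (auto simp: hd_row last_row)

lemma heads_at_sigma: "heads_at (Suc m) (sigma n) \<subseteq> {hd (row m), last (row m)}"
proof
  fix U assume U: "U \<in> heads_at (Suc m) (sigma n)"
  then obtain i where "U = X (replicate i One) \<or> U = Y (replicate i Two)"
    unfolding heads_at_def by (blast elim: heads_sigma_spine)
  moreover have "level U = Suc m"
    using U unfolding heads_at_def by blast
  ultimately show "U \<in> {hd (row m), last (row m)}"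
    by (auto simp: hd_row last_row)
qed

(* The phase at level m + 1 after j transformations: the sum equation has travelled along
   row m to its j-th variable, and above level m + 1 the system differs from sigma n only by
   the links created among children so far. *)
definition phase_state :: "nat \<Rightarrow> nat \<Rightarrow> sys \<Rightarrow> nat \<Rightarrow> bool" where
  "phase_state n m S j \<longleftrightarrow> canonical_sums S \<and> j < length (row m) \<and>
     links_at (Suc m) S = chain_links (row m) \<and>
     heads_at (Suc m) S \<subseteq> {row m ! j, last (row m)} \<and> row m ! j \<in> heads S \<and>
     links_at (Suc (Suc m)) S =
       links_at (Suc (Suc m)) (sigma n) \<union> children_links (chain_links (take (Suc j) (row m))) \<and>
     (\<forall>l > Suc (Suc m). links_at l S = links_at l (sigma n)) \<and>
     (\<forall>l > Suc m. heads_at l S = heads_at l (sigma n))"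

lemma phase_state_sigma: "phase_state n 0 (sigma n) 0"
  using canonical_sums_sigma links_at_sigma_1 heads_at_sigma[of 0 n] X_spine_in_heads_sigma[of 0 n]
  unfolding phase_state_def chain_links_take_Suc_0 by simp

lemma phase_state_peak:
  assumes "phase_state n m S j" "Suc j < length (row m)"
  shows "peak S (row m ! j)"
proof -
  have "level (row m ! j) = Suc m"
    using assms(2) by (simp add: level_row)
  moreover have "(row m ! j, row m ! Suc j) \<in> links_at (Suc m) S"
    using assms unfolding phase_state_def chain_links_def by blast
  ultimately show ?thesis
    using assms(1) unfolding peak_iff phase_state_def links_at_def by auto
qed

lemma phase_state_transform:
  assumes st: "phase_state n m S j" and tr: "sum_transform S U S'" and lv: "level U = Suc m"
  shows "Suc j < length (row m) \<and> U = row m ! j \<and> canonical_sums S' \<and>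
    heads S' = insert (row m ! Suc j) (heads S - {row m ! j}) \<and>
    links S' = links S \<union> children_links {(row m ! j, row m ! Suc j)}"
proof -
  obtain W where head: "U \<in> heads S" and link: "(U, W) \<in> links S" and "canonical_sums S'"
    and "heads S' = insert W (heads S - {U})" and "links S' = links S \<union> children_links {(U, W)}"
    using st tr unfolding phase_state_def by (blast elim: sum_transform_canonical)
  have chain: "(U, W) \<in> chain_links (row m)"
    using st link lv unfolding phase_state_def links_at_def by blast
  then have "U \<noteq> last (row m)"
    by (rule chain_links_fst_neq_last[OF distinct_row])
  moreover have "U \<in> {row m ! j, last (row m)}"
    using st head lv unfolding phase_state_def heads_at_def by blast
  ultimately have U: "U = row m ! j"
    by blast
  have "Suc j < length (row m)"
  proof (rule ccontr)
    assume "\<not> Suc j < length (row m)"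
    moreover have "j < length (row m)"
      using st unfolding phase_state_def by blast
    ultimately have "j = length (row m) - 1"
      by linarith
    then show False
      using \<open>U \<noteq> last (row m)\<close> U by (simp add: last_conv_nth row_ne_Nil)
  qed
  moreover from this have "(U, row m ! Suc j) \<in> chain_links (row m)"
    unfolding U chain_links_def by blast
  with chain have "W = row m ! Suc j"
    by (rule chain_links_functional[OF distinct_row])
  ultimately show ?thesis
    using U \<open>canonical_sums S'\<close> \<open>heads S' = _\<close> \<open>links S' = _\<close> by blast
qed

lemma phase_state_step:
  assumes st: "phase_state n m S j" and tr: "sum_transform S U S'" and lv: "level U = Suc m"
  shows "phase_state n m S' (Suc j)"
proof -
  define U W where "U = row m ! j" and "W = row m ! Suc j"
  have j: "Suc j < length (row m)" and "canonical_sums S'"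
    and heads': "heads S' = insert W (heads S - {U})"
    and links': "links S' = links S \<union> children_links {(U, W)}"
    using phase_state_transform[OF st tr lv] unfolding U_def W_def by blast+
  have "level U = Suc m" "level W = Suc m"
    using j unfolding U_def W_def by (simp_all add: level_row)
  then have new_level: "level A = Suc (Suc m)" if "(A, B) \<in> children_links {(U, W)}" for A B
    using that level_children_links[of "{(U, W)}" m] by blast
  have links_at': "links_at l S' =
      links_at l S \<union> (if l = Suc (Suc m) then children_links {(U, W)} else {})" for l
    unfolding links_at_def links' using new_level by auto
  have heads_at': "heads_at l S' = heads_at l S" if "l \<noteq> Suc m" for l
    unfolding heads_at_def heads' using that \<open>level U = _\<close> \<open>level W = _\<close> by auto
  have "heads_at (Suc m) S' \<subseteq> {W, last (row m)}"
    using st unfolding phase_state_def heads_at_def heads' U_def by auto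
  moreover have "children_links (chain_links (take (Suc (Suc j)) (row m))) =
      children_links {(U, W)} \<union> children_links (chain_links (take (Suc j) (row m)))"
    using j unfolding U_def W_def by (simp add: chain_links_take_Suc children_links_union[symmetric])
  ultimately show ?thesis
    using st j \<open>canonical_sums S'\<close> links_at' heads_at' unfolding phase_state_def heads' W_def
    by (auto simp del: row.simps)
qed

lemma phase_state_steps_at:
  assumes "steps_at (Suc m) S t S'" "phase_state n m S 0"
  shows "phase_state n m S' t"
  using assms by induction (auto intro: phase_state_step)

lemma phase_state_complete_phase:
  assumes "complete_phase (Suc m) S t S'" "phase_state n m S 0"
  shows "Suc t = length (row m) \<and> phase_state n m S' t"
proof -
  have st: "phase_state n m S' t"
    using assms phase_state_steps_at unfolding complete_phase_def by blast
  have "\<not> Suc t < length (row m)"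
  proof
    assume "Suc t < length (row m)"
    then have "peak S' (row m ! t)"
      by (rule phase_state_peak[OF st])
    moreover have "level (row m ! t) = Suc m"
      using \<open>Suc t < _\<close> by (simp add: level_row)
    ultimately show False
      using assms(1) unfolding complete_phase_def by blast
  qed
  moreover have "t < length (row m)"
    using st unfolding phase_state_def by blast
  ultimately show ?thesis
    using st by simp
qed

lemma phase_state_next:
  assumes st: "phase_state n m S (length (row m) - 1)" and "m \<le> n"
  shows "phase_state n (Suc m) S 0"
proof -
  have "take (length (row m)) (row m) = row m"
    by simp
  then have "links_at (Suc (Suc m)) S = chain_links (row (Suc m))"
    using st \<open>m \<le> n\<close> unfolding phase_state_def
    by (simp add: links_at_sigma_Suc_Suc chain_links_row_Suc row_ne_Nil del: row.simps)
  moreover have "heads_at (Suc (Suc m)) S \<subseteq> {row (Suc m) ! 0, last (row (Suc m))}"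
    using st heads_at_sigma[of "Suc m" n] unfolding phase_state_def
    by (simp add: hd_conv_nth[OF row_ne_Nil] del: row.simps)
  moreover have "row (Suc m) ! 0 \<in> heads S"
  proof -
    have "hd (row (Suc m)) \<in> heads_at (Suc (Suc m)) (sigma n)"
      using X_spine_in_heads_sigma[of "Suc m" n] \<open>m \<le> n\<close>
      unfolding heads_at_def by (simp add: hd_row del: row.simps)
    moreover have "heads_at (Suc (Suc m)) S = heads_at (Suc (Suc m)) (sigma n)"
      using st unfolding phase_state_def by blast
    ultimately show ?thesis
      unfolding heads_at_def hd_conv_nth[OF row_ne_Nil] by blast
  qed
  ultimately show ?thesis
    using st unfolding phase_state_def chain_links_take_Suc_0
    by (auto simp: length_row simp del: row.simps)
qed

lemma phase_state_before_phase:
  assumes "Ss 0 = sigma n"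
    and "\<forall>j. 1 \<le> j \<and> j < k \<longrightarrow> complete_phase j (Ss (j - 1)) (c j) (Ss j)"
    and "k < n + 3" and "m < k"
  shows "phase_state n m (Ss m) 0"
  using \<open>m < k\<close>
proof (induction m)
  case 0
  show ?case
    using assms(1) phase_state_sigma by simp
next
  case (Suc m)
  then have "complete_phase (Suc m) (Ss m) (c (Suc m)) (Ss (Suc m))"
    using assms(2) by fastforce
  moreover have "phase_state n m (Ss m) 0"
    using Suc by simp
  ultimately have "Suc (c (Suc m)) = length (row m) \<and> phase_state n m (Ss (Suc m)) (c (Suc m))"
    by (rule phase_state_complete_phase)
  then have "phase_state n m (Ss (Suc m)) (length (row m) - 1)"
    by (metis diff_Suc_1)
  moreover have "m \<le> n"
    using Suc.prems assms(3) by simp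
  ultimately show ?case
    by (rule phase_state_next)
qed

theorem lemma6:
  fixes n k :: nat and Ss :: "nat \<Rightarrow> sys" and c :: "nat \<Rightarrow> nat"
  assumes "Ss 0 = sigma n"
    and "\<forall>j. 1 \<le> j \<and> j < k \<longrightarrow> complete_phase j (Ss (j - 1)) (c j) (Ss j)"
    and "1 \<le> k" and "k < n + 3"
  shows "(\<forall>m S'. steps_at k (Ss (k - 1)) m S' \<longrightarrow> m \<le> 2 ^ k - 1)
       \<and> (\<forall>m S'. complete_phase k (Ss (k - 1)) m S' \<longrightarrow> m = 2 ^ k - 1)"
proof -
  obtain m where k: "k = Suc m"
    using assms(3) by (cases k) auto
  then have st: "phase_state n m (Ss (k - 1)) 0"
    using phase_state_before_phase[OF assms(1,2)] assms(4) by simp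
  show ?thesis
  proof (intro conjI allI impI)
    fix t S' assume "steps_at k (Ss (k - 1)) t S'"
    then have "t < length (row m)"
      using st phase_state_steps_at unfolding k phase_state_def by blast
    then show "t \<le> 2 ^ k - 1"
      unfolding k length_row by simp
  next
    fix t S' assume "complete_phase k (Ss (k - 1)) t S'"
    then have "Suc t = length (row m)"
      using st phase_state_complete_phase unfolding k by blast
    then show "t = 2 ^ k - 1"
      unfolding k length_row by simp
  qed
qed

end
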